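(* Consider the setting and the algorithm described in the context, with generated iterates $\{x^k\}$. Let $\bar x\in\mathcal{X}^*$ and suppose that $\nabla^2\psi$ is strictly continuous at $A\bar x-b$ relative to $A(\mathrm{dom}\,g)-b$ with modulus $L_\psi$, i.e. there is $\delta_0>0$ with $\|\nabla^2\psi(z)-\nabla^2\psi(z')\|\le L_\psi\|z-z'\|$ for all $z,z'\in\mathbb{B}(A\bar x-b,\delta_0)\cap(A(\mathrm{dom}\,g)-b)$; set $\varepsilon_0:=\delta_0/\|A\|$. Then for any $x^k\in\mathbb{B}(\bar x,\varepsilon_0/2)$, $\Lambda_k\le a_1L_\psi\|A\|\,\mathrm{dist}(x^k,\mathcal{X}^* )$, where $\Lambda_k:=a_1[-\lambda_{\min}(\nabla^2\psi(Ax^k-b))]_+$.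
   Context: Let $A\in\mathbb{R}^{m\times n}$ (nonzero), $b\in\mathbb{R}^m$, and let $\psi:\mathbb{R}^m\to(-\infty,\infty]$ and $g:\mathbb{R}^n\to(-\infty,\infty]$ be proper lower semicontinuous functions. Set $f(x):=\psi(Ax-b)$ and $F:=f+g$. Assume: (i) there is an open set $\mathcal{O}\supseteq\mathrm{dom}\,g$ such that $\psi$ is twice continuously differentiable on $A(\mathcal{O})-b$; (ii) $g$ is convex and continuous relative to $\mathrm{dom}\,g$; (iii) $\inf F>-\infty$ and $F$ is level bounded. $\partial$ denotes the limiting subdifferential. Let $\mathcal{P}g(x):=\arg\min_z\{\frac12\|z-x\|^2+g(z)\}$, $R(x):=x-\mathcal{P}g(x-\nabla f(x))$, $r(x):=\|R(x)\|$, $\mathcal{S}^*:=\{x\in\mathrm{dom}\,g:0\in\nabla f(x)+\partial g(x)\}$ and $\mathcal{X}^*:=\{x\in\mathcal{S}^*:\nabla^2\psi(Ax-b)\succeq0\}$. Write $[a]_+=\max(0,a)$, $\lambda_{\min}$ for the smallest eigenvalue, $\mathbb{B}(x,\delta)$ for the closed ball, $\|A\|$ for the spectral norm. Algorithm: parameters $a_1\ge1$, $a_2>0$, $\varrho\in[0,1)$, $\tau\ge\varrho$, $\eta,\beta,\sigma\in(0,1)$, $x^0\in\mathrm{dom}\,g$. At iteration $k$: $\mu_k:=a_2[r(x^k)]^{\varrho}$, $G_k:=\nabla^2 f(x^k)+a_1[-\lambda_{\min}(\nabla^2\psi(Ax^k-b))]_+A^\top A+\mu_kI$, $\Theta_k(x):=f(x^k)+\langle\nabla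 f(x^k),x-x^k\rangle+\frac12(x-x^k)^\top G_k(x-x^k)+g(x)$, $r_k(y):=\|y-\mathcal{P}g(y-\nabla f(x^k)-G_k(y-x^k))\|$. Choose $y^k\in\mathrm{dom}\,g$ with $\Theta_k(y^k)\le\Theta_k(x^k)$ and, if $\varrho\in(0,1)$, $r_k(y^k)\le\eta\min\{r(x^k),[r(x^k)]^{1+\tau}\}$; if $\varrho=0$, $\mathrm{dist}(0,\partial\Theta_k(y^k))\le\eta\, r(x^k)$. Set $d^k:=y^k-x^k$; let $m_k$ be the smallest nonnegative integer $m$ with $F(x^k)-F(x^k+\beta^md^k)\ge\sigma\beta^m\mu_k\|d^k\|^2$, $\alpha_k:=\beta^{m_k}$, and $x^{k+1}:=y^k$ if $F(y^k)<F(x^k+\alpha_kd^k)$, otherwise $x^{k+1}:=x^k+\alpha_kd^k$. The iterates $x^k$ lie in $\mathrm{dom}\,g$. *)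

theory Defs
  imports "HOL-Analysis.Analysis"
begin

definition edom :: "('a \<Rightarrow> ereal) \<Rightarrow> 'a set" where
  "edom h = {x. h x < \<infinity>}"

definition proper_fun :: "('a \<Rightarrow> ereal) \<Rightarrow> bool" where
  "proper_fun h \<longleftrightarrow> (\<exists>x. h x < \<infinity>) \<and> (\<forall>x. h x > -\<infinity>)"

definition lsc_fun :: "('a::topological_space \<Rightarrow> ereal) \<Rightarrow> bool" where
  "lsc_fun h \<longleftrightarrow> (\<forall>x X. X \<longlonglongrightarrow> x \<longrightarrow> h x \<le> liminf (\<lambda>k. h (X k)))"

definition convex_efun :: "('a::real_vector \<Rightarrow> ereal) \<Rightarrow> bool" where
  "convex_efun h \<longleftrightarrow> (\<forall>x y t. 0 \<le> t \<and> t \<le> 1 \<longrightarrow>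
      h ((1 - t) *\<^sub>R x + t *\<^sub>R y) \<le> ereal (1 - t) * h x + ereal t * h y)"

definition level_bounded :: "('a::metric_space \<Rightarrow> ereal) \<Rightarrow> bool" where
  "level_bounded h \<longleftrightarrow> (\<forall>c::real. bounded {x. h x \<le> ereal c})"

text \<open>Regular (Frechet) subdifferential: v is a regular subgradient at x iff h x is finite and
  liminf_{z->x, z~=x} (h z - h x - <v, z - x>)/|z - x| >= 0 (written out with epsilon-delta).\<close>
definition regular_subdiff :: "('a::real_inner \<Rightarrow> ereal) \<Rightarrow> 'a \<Rightarrow> 'a set" where
  "regular_subdiff h x = {v. \<bar>h x\<bar> \<noteq> \<infinity> \<and>
      (\<forall>e>0. \<exists>d>0. \<forall>z. norm (z - x) < d \<longrightarrow>
          h z \<ge> ereal (real_of_ereal (h x) + inner v (z - x) - e * norm (z - x)))}"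

definition limiting_subdiff :: "('a::real_inner \<Rightarrow> ereal) \<Rightarrow> 'a \<Rightarrow> 'a set" where
  "limiting_subdiff h x = {v. \<bar>h x\<bar> \<noteq> \<infinity> \<and>
      (\<exists>X V. X \<longlonglongrightarrow> x \<and> (\<lambda>k. h (X k)) \<longlonglongrightarrow> h x \<and> V \<longlonglongrightarrow> v \<and>
             (\<forall>k. V k \<in> regular_subdiff h (X k)))}"

text \<open>Proximal mapping of h (single-valued for proper lsc convex h).\<close>
definition prox :: "('a::real_normed_vector \<Rightarrow> ereal) \<Rightarrow> 'a \<Rightarrow> 'a" where
  "prox h x = (THE z. \<forall>w. ereal ((norm (z - x))\<^sup>2 / 2) + h z \<le> ereal ((norm (w - x))\<^sup>2 / 2) + h w)"

definition mat_eigenvalue :: "real^'n^'n \<Rightarrow> real \<Rightarrow> bool" where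
  "mat_eigenvalue M l \<longleftrightarrow> (\<exists>v. v \<noteq> 0 \<and> M *v v = l *\<^sub>R v)"

text \<open>Smallest eigenvalue (used for symmetric matrices, whose eigenvalues are real).\<close>
definition lambda_min :: "real^'n^'n \<Rightarrow> real" where
  "lambda_min M = Inf {l. mat_eigenvalue M l}"

definition spec_norm :: "real^'n^'m \<Rightarrow> real" where
  "spec_norm M = onorm (\<lambda>v. M *v v)"

definition psd :: "real^'n^'n \<Rightarrow> bool" where
  "psd M \<longleftrightarrow> (\<forall>v. 0 \<le> v \<bullet> (M *v v))"

definition fobj :: "real^'n^'m \<Rightarrow> real^'m \<Rightarrow> (real^'m \<Rightarrow> ereal) \<Rightarrow> real^'n \<Rightarrow> ereal" where
  "fobj A b psi x = psi (A *v x - b)"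

definition Fobj :: "real^'n^'m \<Rightarrow> real^'m \<Rightarrow> (real^'m \<Rightarrow> ereal) \<Rightarrow> (real^'n \<Rightarrow> ereal) \<Rightarrow> real^'n \<Rightarrow> ereal" where
  "Fobj A b psi g x = psi (A *v x - b) + g x"

definition gradf :: "real^'n^'m \<Rightarrow> real^'m \<Rightarrow> (real^'m \<Rightarrow> real^'m) \<Rightarrow> real^'n \<Rightarrow> real^'n" where
  "gradf A b gpsi x = transpose A *v gpsi (A *v x - b)"

definition hessf :: "real^'n^'m \<Rightarrow> real^'m \<Rightarrow> (real^'m \<Rightarrow> real^'m^'m) \<Rightarrow> real^'n \<Rightarrow> real^'n^'n" where
  "hessf A b Hpsi x = transpose A ** Hpsi (A *v x - b) ** A"

definition Rres :: "real^'n^'m \<Rightarrow> real^'m \<Rightarrow> (real^'m \<Rightarrow> real^'m) \<Rightarrow> (real^'n \<Rightarrow> ereal) \<Rightarrow> real^'n \<Rightarrow> real^'n" where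
  "Rres A b gpsi g x = x - prox g (x - gradf A b gpsi x)"

definition rres :: "real^'n^'m \<Rightarrow> real^'m \<Rightarrow> (real^'m \<Rightarrow> real^'m) \<Rightarrow> (real^'n \<Rightarrow> ereal) \<Rightarrow> real^'n \<Rightarrow> real" where
  "rres A b gpsi g x = norm (Rres A b gpsi g x)"

definition Sstar :: "real^'n^'m \<Rightarrow> real^'m \<Rightarrow> (real^'m \<Rightarrow> real^'m) \<Rightarrow> (real^'n \<Rightarrow> ereal) \<Rightarrow> (real^'n) set" where
  "Sstar A b gpsi g = {x \<in> edom g. 0 \<in> (\<lambda>v. gradf A b gpsi x + v) ` limiting_subdiff g x}"

definition Xstar :: "real^'n^'m \<Rightarrow> real^'m \<Rightarrow> (real^'m \<Rightarrow> real^'m) \<Rightarrow> (real^'m \<Rightarrow> real^'m^'m) \<Rightarrow> (real^'n \<Rightarrow> ereal) \<Rightarrow> (real^'n) set" where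
  "Xstar A b gpsi Hpsi g = {x \<in> Sstar A b gpsi g. psd (Hpsi (A *v x - b))}"

text \<open>mu_k = a2 * r(x^k)^rho, with the convention t^0 = 1 (Isabelle's 0 powr 0 = 0 is avoided).\<close>
definition mu_k :: "real \<Rightarrow> real \<Rightarrow> real \<Rightarrow> real" where
  "mu_k a2 rho r = a2 * (if rho = 0 then 1 else r powr rho)"

definition Lam_k :: "real \<Rightarrow> real^'m^'m \<Rightarrow> real" where
  "Lam_k a1 H = a1 * max 0 (- lambda_min H)"

definition Gmat :: "real^'n^'m \<Rightarrow> real^'m \<Rightarrow> (real^'m \<Rightarrow> real^'m^'m) \<Rightarrow> real \<Rightarrow> real \<Rightarrow> real^'n \<Rightarrow> real^'n^'n" where
  "Gmat A b Hpsi a1 mu xk = hessf A b Hpsi xk + Lam_k a1 (Hpsi (A *v xk - b)) *\<^sub>R (transpose A ** A)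
      + mu *\<^sub>R mat 1"

definition Theta :: "real^'n^'m \<Rightarrow> real^'m \<Rightarrow> (real^'m \<Rightarrow> ereal) \<Rightarrow> (real^'m \<Rightarrow> real^'m)
    \<Rightarrow> (real^'n \<Rightarrow> ereal) \<Rightarrow> real^'n^'n \<Rightarrow> real^'n \<Rightarrow> real^'n \<Rightarrow> ereal" where
  "Theta A b psi gpsi g G xk z = fobj A b psi xk
      + ereal (gradf A b gpsi xk \<bullet> (z - xk) + (z - xk) \<bullet> (G *v (z - xk)) / 2) + g z"

definition rk :: "real^'n^'m \<Rightarrow> real^'m \<Rightarrow> (real^'m \<Rightarrow> real^'m)
    \<Rightarrow> (real^'n \<Rightarrow> ereal) \<Rightarrow> real^'n^'n \<Rightarrow> real^'n \<Rightarrow> real^'n \<Rightarrow> real" where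
  "rk A b gpsi g G xk z = norm (z - prox g (z - gradf A b gpsi xk - G *v (z - xk)))"

definition armijo :: "(real^'n \<Rightarrow> ereal) \<Rightarrow> real \<Rightarrow> real \<Rightarrow> real \<Rightarrow> real^'n \<Rightarrow> real^'n \<Rightarrow> nat \<Rightarrow> bool" where
  "armijo F beta sgm mu xk d m \<longleftrightarrow>
      F (xk + (beta ^ m) *\<^sub>R d) + ereal (sgm * beta ^ m * mu * (norm d)\<^sup>2) \<le> F xk"

end

theory Submission
  imports Defs
begin

text \<open>
  For a symmetric matrix H and a positive semidefinite P, every eigenvalue of H is at least
  -||H - P||.  With H = nabla^2 psi(A x^k - b) and P = nabla^2 psi(A z - b) for z in X*, strict
  continuity of nabla^2 psi gives Lambda_k <= a1 L_psi ||A|| ||x^k - z|| for every z in X* within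
  eps0 of xbar; this needs x^k in dom g, which holds because dom g is convex and every iterate lies
  on the segment from x^k to y^k.  A point of X* farther than eps0 from xbar is farther from x^k
  (which is within eps0/2 of xbar) than xbar itself, so the estimate passes to dist(x^k, X*).
  The symmetry of the Hessian is Schwarz's theorem, obtained from second difference quotients.
\<close>

lemma has_real_derivative_along_line:
  fixes f :: "'a::real_normed_vector \<Rightarrow> real"
  assumes "(f has_derivative f') (at (p + s *\<^sub>R h))"
  shows "((\<lambda>s. f (p + s *\<^sub>R h)) has_real_derivative f' h) (at s)"
proof -
  have "((\<lambda>s. p + s *\<^sub>R h) has_derivative (\<lambda>d. d *\<^sub>R h)) (at s)"
    by (auto intro!: derivative_eq_intros)
  from has_derivative_compose[OF this assms] show ?thesis
    unfolding has_field_derivative_def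
    by (rule has_derivative_eq_rhs)
      (use has_derivative_bounded_linear[OF assms]
        in \<open>auto simp: fun_eq_iff linear_cmul[OF bounded_linear.linear] mult.commute\<close>)
qed

lemma continuous_on_matrix_bilinear_form:
  fixes Hf :: "'a::topological_space \<Rightarrow> real^'m^'n"
  assumes "continuous_on U Hf"
  shows "continuous_on U (\<lambda>w. (Hf w *v k) \<bullet> h)"
  unfolding matrix_vector_mult_def using assms by (intro continuous_intros)

definition second_difference :: "('a::real_vector \<Rightarrow> real) \<Rightarrow> 'a \<Rightarrow> 'a \<Rightarrow> 'a \<Rightarrow> real \<Rightarrow> real" where
  "second_difference f z h k t = f (z + t *\<^sub>R h + t *\<^sub>R k) - f (z + t *\<^sub>R h) - f (z + t *\<^sub>R k) + f z"

lemma second_difference_commute: "second_difference f z h k t = second_difference f z k h t"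
  unfolding second_difference_def by (simp add: add_ac)

lemma second_difference_mean_value:
  fixes f :: "real^'m \<Rightarrow> real" and gf :: "real^'m \<Rightarrow> real^'m" and Hf :: "real^'m \<Rightarrow> real^'m^'m"
  assumes df: "\<forall>w\<in>U. (f has_derivative (\<lambda>d. gf w \<bullet> d)) (at w)"
    and dg: "\<forall>w\<in>U. (gf has_derivative (\<lambda>d. Hf w *v d)) (at w)"
    and "0 < t"
    and in_U: "\<And>s r. s \<in> {0..t} \<Longrightarrow> r \<in> {0..t} \<Longrightarrow> z + s *\<^sub>R h + r *\<^sub>R k \<in> U"
  obtains s r where "s \<in> {0..t}" "r \<in> {0..t}"
    "second_difference f z h k t = t\<^sup>2 * ((Hf (z + s *\<^sub>R h + r *\<^sub>R k) *v k) \<bullet> h)"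
proof -
  define D where "D s = f (z + t *\<^sub>R k + s *\<^sub>R h) - f (z + s *\<^sub>R h)" for s
  have "(D has_real_derivative gf (z + t *\<^sub>R k + s *\<^sub>R h) \<bullet> h - gf (z + s *\<^sub>R h) \<bullet> h) (at s)"
    if "0 \<le> s" "s \<le> t" for s
  proof -
    have "z + t *\<^sub>R k + s *\<^sub>R h \<in> U" "z + s *\<^sub>R h \<in> U"
      using in_U[of s 0] in_U[of s t] that \<open>0 < t\<close> by (auto simp: add_ac)
    then show ?thesis
      using df has_real_derivative_along_line[of f "(\<bullet>) (gf (z + t *\<^sub>R k + s *\<^sub>R h))" "z + t *\<^sub>R k" s h]
        has_real_derivative_along_line[of f "(\<bullet>) (gf (z + s *\<^sub>R h))" z s h]
      unfolding D_def by (auto intro!: derivative_eq_intros)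
  qed
  from MVT2[OF \<open>0 < t\<close> this] obtain s where "0 < s" "s < t"
    and D: "D t - D 0 = t * (gf (z + t *\<^sub>R k + s *\<^sub>R h) \<bullet> h - gf (z + s *\<^sub>R h) \<bullet> h)"
    by auto
  define E where "E r = gf (z + s *\<^sub>R h + r *\<^sub>R k) \<bullet> h" for r
  have "(E has_real_derivative (Hf (z + s *\<^sub>R h + r *\<^sub>R k) *v k) \<bullet> h) (at r)"
    if "0 \<le> r" "r \<le> t" for r
  proof -
    have "z + s *\<^sub>R h + r *\<^sub>R k \<in> U" using in_U \<open>0 < s\<close> \<open>s < t\<close> that by auto
    then show ?thesis
      using dg has_real_derivative_along_line[OF has_derivative_inner_left,
          of gf "(*v) (Hf (z + s *\<^sub>R h + r *\<^sub>R k))" "z + s *\<^sub>R h" r k h]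
      unfolding E_def by auto
  qed
  from MVT2[OF \<open>0 < t\<close> this] obtain r where "0 < r" "r < t"
    and E: "E t - E 0 = t * ((Hf (z + s *\<^sub>R h + r *\<^sub>R k) *v k) \<bullet> h)"
    by auto
  have "second_difference f z h k t = t * (E t - E 0)"
    using D by (simp add: second_difference_def D_def E_def add_ac)
  with E \<open>0 < s\<close> \<open>s < t\<close> \<open>0 < r\<close> \<open>r < t\<close> show thesis
    by (intro that[of s r]) (auto simp: power2_eq_square)
qed

lemma dist_add_scaleR_le:
  fixes z h k :: "'a::real_normed_vector"
  assumes "s \<in> {0..t}" and "r \<in> {0..t}"
  shows "dist (z + s *\<^sub>R h + r *\<^sub>R k) z \<le> t * (norm h + norm k)"
proof -
  have "dist (z + s *\<^sub>R h + r *\<^sub>R k) z \<le> s * norm h + r * norm k"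
    using assms norm_triangle_ineq[of "s *\<^sub>R h" "r *\<^sub>R k"] by (simp add: dist_norm add.assoc)
  also have "\<dots> \<le> t * (norm h + norm k)"
    using assms mult_right_mono[of s t "norm h"] mult_right_mono[of r t "norm k"]
    by (simp add: algebra_simps)
  finally show ?thesis .
qed

lemma second_difference_quotient_tendsto:
  fixes f :: "real^'m \<Rightarrow> real" and gf :: "real^'m \<Rightarrow> real^'m" and Hf :: "real^'m \<Rightarrow> real^'m^'m"
  assumes df: "\<forall>w\<in>U. (f has_derivative (\<lambda>d. gf w \<bullet> d)) (at w)"
    and dg: "\<forall>w\<in>U. (gf has_derivative (\<lambda>d. Hf w *v d)) (at w)"
    and "open U" and "continuous_on U Hf" and "z \<in> U"
  shows "((\<lambda>t. second_difference f z h k t / t\<^sup>2) \<longlongrightarrow> (Hf z *v k) \<bullet> h) (at_right 0)"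
  unfolding tendsto_iff
proof (intro allI impI)
  fix e :: real assume "0 < e"
  have "isCont (\<lambda>w. (Hf w *v k) \<bullet> h) z"
    using continuous_on_matrix_bilinear_form[OF \<open>continuous_on U Hf\<close>] \<open>open U\<close> \<open>z \<in> U\<close>
    by (simp add: continuous_on_eq_continuous_at)
  then obtain d1 where "0 < d1"
    and d1: "\<And>w. dist w z < d1 \<Longrightarrow> dist ((Hf w *v k) \<bullet> h) ((Hf z *v k) \<bullet> h) < e"
    using \<open>0 < e\<close> unfolding continuous_at_eps_delta by blast
  obtain d2 where "0 < d2" "ball z d2 \<subseteq> U"
    using \<open>open U\<close> \<open>z \<in> U\<close> open_contains_ball by blast
  define d where "d = min d1 d2"
  have "0 < d" using \<open>0 < d1\<close> \<open>0 < d2\<close> by (simp add: d_def)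
  define c where "c = norm h + norm k + 1"
  have "0 < c" by (simp add: c_def add_nonneg_pos)
  have near: "dist (z + s *\<^sub>R h + r *\<^sub>R k) z < d" if "t < d / c" "s \<in> {0..t}" "r \<in> {0..t}" for t s r
  proof -
    have "t * (norm h + norm k) \<le> t * c" using that by (auto simp: c_def intro!: mult_left_mono)
    also have "\<dots> < d" using that \<open>0 < c\<close> by (simp add: pos_less_divide_eq)
    finally show ?thesis using dist_add_scaleR_le[OF that(2,3), of z h k] by linarith
  qed
  show "\<forall>\<^sub>F t in at_right 0. dist (second_difference f z h k t / t\<^sup>2) ((Hf z *v k) \<bullet> h) < e"
    unfolding eventually_at_right_field
  proof (intro exI conjI allI impI)
    show "0 < d / c" using \<open>0 < d\<close> \<open>0 < c\<close> by simp
    fix t :: real assume "0 < t" "t < d / c"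
    have "z + s *\<^sub>R h + r *\<^sub>R k \<in> U" if "s \<in> {0..t}" "r \<in> {0..t}" for s r
      using near[OF \<open>t < d / c\<close> that] \<open>ball z d2 \<subseteq> U\<close> by (auto simp: d_def dist_commute)
    then obtain s r where "s \<in> {0..t}" "r \<in> {0..t}" and
      eq: "second_difference f z h k t = t\<^sup>2 * ((Hf (z + s *\<^sub>R h + r *\<^sub>R k) *v k) \<bullet> h)"
      using second_difference_mean_value[OF df dg \<open>0 < t\<close>] by blast
    have "dist ((Hf (z + s *\<^sub>R h + r *\<^sub>R k) *v k) \<bullet> h) ((Hf z *v k) \<bullet> h) < e"
      using d1 near[OF \<open>t < d / c\<close> \<open>s \<in> {0..t}\<close> \<open>r \<in> {0..t}\<close>] by (simp add: d_def)
    then show "dist (second_difference f z h k t / t\<^sup>2) ((Hf z *v k) \<bullet> h) < e"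
      using \<open>0 < t\<close> by (simp add: eq)
  qed
qed

lemma hessian_symmetric:
  fixes f :: "real^'m \<Rightarrow> real" and gf :: "real^'m \<Rightarrow> real^'m" and Hf :: "real^'m \<Rightarrow> real^'m^'m"
  assumes "\<forall>w\<in>U. (f has_derivative (\<lambda>d. gf w \<bullet> d)) (at w)"
    and "\<forall>w\<in>U. (gf has_derivative (\<lambda>d. Hf w *v d)) (at w)"
    and "open U" and "continuous_on U Hf" and "z \<in> U"
  shows "(Hf z *v k) \<bullet> h = (Hf z *v h) \<bullet> k"
  using tendsto_unique[OF trivial_limit_at_right_real
      second_difference_quotient_tendsto[OF assms, of h k]
      second_difference_quotient_tendsto[OF assms, of k h, unfolded second_difference_commute[of f z k h]]] .

lemma quadratic_nonneg_imp_linear_coeff_zero: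
  fixes a q :: real
  assumes "\<forall>t. 0 \<le> 2 * t * a + t\<^sup>2 * q"
  shows "a = 0"
proof (rule ccontr)
  assume "a \<noteq> 0"
  define d where "d = q + 1"
  have "0 < d" using assms[rule_format, of 1] assms[rule_format, of "-1"] by (simp add: d_def)
  have "0 \<le> 2 * (- a / d) * a + (- a / d)\<^sup>2 * (d - 1)"
    using assms[rule_format, of "- a / d"] by (simp add: d_def)
  also have "\<dots> = - a\<^sup>2 * (d + 1) / d\<^sup>2"
    using \<open>0 < d\<close> by (simp add: field_simps power2_eq_square)
  also have "\<dots> < 0"
    using \<open>a \<noteq> 0\<close> \<open>0 < d\<close> by (simp add: divide_neg_pos)
  finally show False by simp
qed

lemma rayleigh_minimizer_is_eigenvector:
  fixes M :: "real^'n^'n"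
  assumes sym: "\<And>h k. (M *v k) \<bullet> h = (M *v h) \<bullet> k"
    and min: "\<And>w. mu * (w \<bullet> w) \<le> w \<bullet> (M *v w)"
    and attained: "v \<bullet> (M *v v) = mu * (v \<bullet> v)"
  shows "M *v v = mu *\<^sub>R v"
proof -
  define c where "c = M *v v - mu *\<^sub>R v"
  have "(v + t *\<^sub>R c) \<bullet> (M *v (v + t *\<^sub>R c)) - mu * ((v + t *\<^sub>R c) \<bullet> (v + t *\<^sub>R c))
      = 2 * t * (c \<bullet> c) + t\<^sup>2 * (c \<bullet> (M *v c) - mu * (c \<bullet> c))" for t
    using attained sym[of c v]
    by (simp add: c_def algebra_simps inner_commute power2_eq_square)
  then have "\<forall>t. 0 \<le> 2 * t * (c \<bullet> c) + t\<^sup>2 * (c \<bullet> (M *v c) - mu * (c \<bullet> c))"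
    using min by (metis diff_ge_0_iff_ge)
  then have "c \<bullet> c = 0" by (rule quadratic_nonneg_imp_linear_coeff_zero)
  then show ?thesis by (simp add: c_def)
qed

lemma symmetric_matrix_has_eigenvalue:
  fixes M :: "real^'n^'n"
  assumes sym: "\<And>h k. (M *v k) \<bullet> h = (M *v h) \<bullet> k"
  shows "\<exists>l. mat_eigenvalue M l"
proof -
  have cont: "continuous_on (sphere 0 1) (\<lambda>v. v \<bullet> (M *v v))"
    by (intro continuous_intros)
  obtain v where v: "v \<in> sphere (0::real^'n) 1"
    and min: "\<And>u. u \<in> sphere 0 1 \<Longrightarrow> v \<bullet> (M *v v) \<le> u \<bullet> (M *v u)"
    using continuous_attains_inf[OF compact_sphere _ cont] by auto
  define mu where "mu = v \<bullet> (M *v v)"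
  have "mu * (w \<bullet> w) \<le> w \<bullet> (M *v w)" for w
  proof (cases "w = 0")
    case False
    then have "mu \<le> (w /\<^sub>R norm w) \<bullet> (M *v (w /\<^sub>R norm w))"
      unfolding mu_def by (intro min) simp
    also have "\<dots> = (w \<bullet> (M *v w)) / (w \<bullet> w)"
      by (simp add: matrix_vector_mult_scaleR dot_square_norm power2_eq_square field_simps)
    finally show ?thesis using False by (simp add: pos_le_divide_eq)
  qed simp
  moreover have "v \<bullet> (M *v v) = mu * (v \<bullet> v)"
    using v by (simp add: mu_def dot_square_norm)
  ultimately have "M *v v = mu *\<^sub>R v"
    by (rule rayleigh_minimizer_is_eigenvector[OF sym])
  moreover have "v \<noteq> 0" using v by auto
  ultimately show ?thesis unfolding mat_eigenvalue_def by blast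
qed

lemma spec_norm_bound: "norm (M *v v) \<le> spec_norm M * norm v"
  unfolding spec_norm_def using onorm[OF matrix_vector_mul_bounded_linear] .

lemma spec_norm_nonneg: "0 \<le> spec_norm M"
  unfolding spec_norm_def using onorm_pos_le[OF matrix_vector_mul_bounded_linear] .

lemma spec_norm_pos: "M \<noteq> 0 \<Longrightarrow> 0 < spec_norm M"
  unfolding spec_norm_def by (simp add: onorm_pos_lt[OF matrix_vector_mul_bounded_linear] matrix_eq)

lemma affine_image_in_cball:
  assumes "A \<noteq> 0" and "dist u xbar \<le> delta / spec_norm A"
  shows "A *v u - b \<in> cball (A *v xbar - b) delta"
proof -
  have "norm (A *v (xbar - u)) \<le> spec_norm A * dist u xbar"
    using spec_norm_bound[of A "xbar - u"] by (simp add: dist_norm norm_minus_commute)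
  also have "\<dots> \<le> delta"
    using assms spec_norm_pos[OF \<open>A \<noteq> 0\<close>] by (simp add: pos_le_divide_eq mult.commute)
  finally show ?thesis by (simp add: dist_norm matrix_vector_mult_diff_distrib)
qed

lemma eigenvalue_ge_neg_spec_norm_diff_psd:
  assumes "mat_eigenvalue M l" and "psd P"
  shows "- spec_norm (M - P) \<le> l"
proof -
  obtain v where "v \<noteq> 0" and v: "M *v v = l *\<^sub>R v"
    using assms(1) by (auto simp: mat_eigenvalue_def)
  have "\<bar>v \<bullet> ((M - P) *v v)\<bar> \<le> norm v * (spec_norm (M - P) * norm v)"
    using Cauchy_Schwarz_ineq2[of v] spec_norm_bound[of "M - P" v]
    by (meson mult_left_mono norm_ge_zero order_trans)
  moreover have "v \<bullet> ((M - P) *v v) = l * (v \<bullet> v) - v \<bullet> (P *v v)"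
    by (simp add: v matrix_vector_mult_diff_rdistrib inner_diff_right)
  moreover have "0 \<le> v \<bullet> (P *v v)" using \<open>psd P\<close> by (simp add: psd_def)
  ultimately have "(- spec_norm (M - P)) * (v \<bullet> v) \<le> l * (v \<bullet> v)"
    by (simp add: dot_square_norm power2_eq_square algebra_simps abs_le_iff)
  then show ?thesis
    using mult_right_le_imp_le[of "- spec_norm (M - P)" "v \<bullet> v" l] \<open>v \<noteq> 0\<close> by simp
qed

text \<open>Symmetry is used only to make the set of eigenvalues nonempty: for a matrix without
  real eigenvalues lambda_min would be the junk value Inf {}.\<close>

lemma Lam_k_le_spec_norm_diff_psd:
  fixes M P :: "real^'n^'n"
  assumes "\<And>h k. (M *v k) \<bullet> h = (M *v h) \<bullet> k" and "psd P" and "0 \<le> a1"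
  shows "Lam_k a1 M \<le> a1 * spec_norm (M - P)"
proof -
  have "- spec_norm (M - P) \<le> lambda_min M"
    unfolding lambda_min_def using symmetric_matrix_has_eigenvalue[OF assms(1)]
    by (intro cInf_greatest) (auto intro: eigenvalue_ge_neg_spec_norm_diff_psd[OF _ \<open>psd P\<close>])
  then show ?thesis
    using spec_norm_nonneg[of "M - P"] \<open>0 \<le> a1\<close> by (simp add: Lam_k_def mult_left_mono)
qed

lemma Lam_k_le_lipschitz_dist:
  fixes A :: "real^'n^'m" and M P :: "real^'m^'m"
  assumes "\<And>h k. (M *v k) \<bullet> h = (M *v h) \<bullet> k" and "psd P" and "0 \<le> a1" and "0 \<le> L"
    and "spec_norm (M - P) \<le> L * norm ((A *v x - b) - (A *v z - b))"
  shows "Lam_k a1 M \<le> a1 * L * spec_norm A * dist x z"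
proof -
  have "Lam_k a1 M \<le> a1 * spec_norm (M - P)"
    using Lam_k_le_spec_norm_diff_psd assms(1-3) .
  also have "\<dots> \<le> a1 * (L * norm (A *v (x - z)))"
    using assms(3,5) by (simp add: mult_left_mono matrix_vector_mult_diff_distrib)
  also have "\<dots> \<le> a1 * (L * (spec_norm A * dist x z))"
    using assms(3,4) spec_norm_bound[of A "x - z"] by (simp add: dist_norm mult_left_mono)
  finally show ?thesis by (simp add: mult.assoc)
qed

lemma le_infdist_if_local_bound:
  fixes x xbar :: "'a::metric_space"
  assumes "xbar \<in> X" and "dist x xbar \<le> r" and "0 \<le> C"
    and local: "\<And>z. z \<in> X \<Longrightarrow> dist z xbar \<le> 2 * r \<Longrightarrow> v \<le> C * dist x z"
  shows "v \<le> C * infdist x X"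
proof -
  have global: "v \<le> C * dist x z" if "z \<in> X" for z
  proof (cases "dist z xbar \<le> 2 * r")
    case False
    then have "dist x xbar \<le> dist x z"
      using assms(2) dist_triangle[of z xbar x] by (simp add: dist_commute)
    moreover have "v \<le> C * dist x xbar"
      using local[OF \<open>xbar \<in> X\<close>] assms(2) zero_le_dist[of x xbar] by simp
    ultimately show ?thesis
      using \<open>0 \<le> C\<close> by (meson mult_left_mono order_trans)
  qed (use local that in blast)
  show ?thesis
  proof (cases "C = 0")
    case True
    then show ?thesis using global[OF \<open>xbar \<in> X\<close>] by simp
  next
    case False
    then have "0 < C" using \<open>0 \<le> C\<close> by simp
    have "X \<noteq> {}" using \<open>xbar \<in> X\<close> by blast
    then have "v / C \<le> infdist x X"
      unfolding infdist_notempty[OF \<open>X \<noteq> {}\<close>]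
      by (rule cINF_greatest) (use global \<open>0 < C\<close> in \<open>simp add: pos_divide_le_eq mult.commute\<close>)
    then show ?thesis using \<open>0 < C\<close> by (simp add: pos_divide_le_eq mult.commute)
  qed
qed

lemma convex_edom:
  assumes "convex_efun g"
  shows "convex (edom g)"
proof (rule convexI)
  fix x y and u v :: real
  assume "x \<in> edom g" "y \<in> edom g" "0 \<le> u" "0 \<le> v" "u + v = 1"
  then have "g (u *\<^sub>R x + v *\<^sub>R y) \<le> ereal u * g x + ereal v * g y"
    using assms unfolding convex_efun_def
    by (metis add_diff_cancel_right' le_add_same_cancel2)
  also have "\<dots> < \<infinity>"
    using \<open>x \<in> edom g\<close> \<open>y \<in> edom g\<close> \<open>0 \<le> u\<close> \<open>0 \<le> v\<close>
    by (cases "g x"; cases "g y") (auto simp: edom_def)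
  finally show "u *\<^sub>R x + v *\<^sub>R y \<in> edom g" by (simp add: edom_def)
qed

lemma step_in_closed_segment:
  fixes x y :: "'a::real_vector"
  assumes "0 \<le> beta" and "beta \<le> 1"
  shows "(let alpha = beta ^ m; z = x + alpha *\<^sub>R (y - x) in if P z then y else z) \<in> closed_segment x y"
proof -
  have "x + beta ^ m *\<^sub>R (y - x) \<in> closed_segment x y"
    using assms by (auto simp: in_segment algebra_simps power_le_one intro!: exI[of _ "beta ^ m"])
  then show ?thesis by (simp add: Let_def)
qed

lemma sequence_in_convex_set:
  assumes "convex S" and "x 0 \<in> S" and "\<And>k. y k \<in> S"
    and "\<And>k. x (Suc k) \<in> closed_segment (x k) (y k)"
  shows "x k \<in> S"
  using assms convex_contains_segment by (induction k) blast+

theorem lemma4p6: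
  fixes A :: "real^'n^'m" and b :: "real^'m"
    and psi :: "real^'m \<Rightarrow> ereal" and g :: "real^'n \<Rightarrow> ereal"
    and gpsi :: "real^'m \<Rightarrow> real^'m" and Hpsi :: "real^'m \<Rightarrow> real^'m^'m"
    and Oo :: "(real^'n) set" and U :: "(real^'m) set"
    and a1 a2 rho tau eta beta sgm :: real
    and x y :: "nat \<Rightarrow> real^'n"
    and xbar :: "real^'n" and Lpsi delta0 :: real
  assumes A_nz: "A \<noteq> 0"
    and psi_proper: "proper_fun psi" and psi_lsc: "lsc_fun psi"
    and g_proper: "proper_fun g" and g_lsc: "lsc_fun g"
    (* (i) psi is C^2 on (an open neighbourhood U of) A(O) - b, O open, O \<supseteq> dom g *)
    and O_open: "open Oo" and domg_O: "edom g \<subseteq> Oo"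
    and U_open: "open U" and AO_U: "(\<lambda>u. A *v u - b) ` Oo \<subseteq> U"
    and psi_fin: "\<forall>z\<in>U. psi z \<noteq> \<infinity>"
    and psi_grad: "\<forall>z\<in>U. ((\<lambda>w. real_of_ereal (psi w)) has_derivative (\<lambda>h. gpsi z \<bullet> h)) (at z)"
    and psi_hess: "\<forall>z\<in>U. (gpsi has_derivative (\<lambda>h. Hpsi z *v h)) (at z)"
    and hess_cont: "continuous_on U Hpsi"
    (* (ii) *)
    and g_convex: "convex_efun g" and g_cont: "continuous_on (edom g) g"
    (* (iii) *)
    and F_bdd: "\<exists>c::real. \<forall>u. ereal c \<le> Fobj A b psi g u"
    and F_lb: "level_bounded (Fobj A b psi g)"
    (* parameters *)
    and a1: "1 \<le> a1" and a2: "0 < a2" and rho: "0 \<le> rho" "rho < 1" and tau: "rho \<le> tau"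
    and eta: "0 < eta" "eta < 1" and beta: "0 < beta" "beta < 1" and sgm: "0 < sgm" "sgm < 1"
    (* the iterates *)
    and x0: "x 0 \<in> edom g"
    and y_dom: "\<forall>k. y k \<in> edom g"
    and y_descent: "\<forall>k. Theta A b psi gpsi g
          (Gmat A b Hpsi a1 (mu_k a2 rho (rres A b gpsi g (x k))) (x k)) (x k) (y k)
        \<le> Theta A b psi gpsi g
          (Gmat A b Hpsi a1 (mu_k a2 rho (rres A b gpsi g (x k))) (x k)) (x k) (x k)"
    and y_inexact_pos: "0 < rho \<Longrightarrow> \<forall>k.
        rk A b gpsi g (Gmat A b Hpsi a1 (mu_k a2 rho (rres A b gpsi g (x k))) (x k)) (x k) (y k)
        \<le> eta * min (rres A b gpsi g (x k)) ((rres A b gpsi g (x k)) powr (1 + tau))"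
    and y_inexact_zero: "rho = 0 \<Longrightarrow> \<forall>k.
        limiting_subdiff (Theta A b psi gpsi g
            (Gmat A b Hpsi a1 (mu_k a2 rho (rres A b gpsi g (x k))) (x k)) (x k)) (y k) \<noteq> {} \<and>
        infdist 0 (limiting_subdiff (Theta A b psi gpsi g
            (Gmat A b Hpsi a1 (mu_k a2 rho (rres A b gpsi g (x k))) (x k)) (x k)) (y k))
        \<le> eta * rres A b gpsi g (x k)"
    and ls_exists: "\<forall>k. \<exists>m. armijo (Fobj A b psi g) beta sgm
        (mu_k a2 rho (rres A b gpsi g (x k))) (x k) (y k - x k) m"
    and x_next: "\<forall>k. x (Suc k) =
        (let alpha = beta ^ (LEAST m. armijo (Fobj A b psi g) beta sgm
                       (mu_k a2 rho (rres A b gpsi g (x k))) (x k) (y k - x k) m);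
             z = x k + alpha *\<^sub>R (y k - x k)
         in if Fobj A b psi g (y k) < Fobj A b psi g z then y k else z)"
    (* the lemma's hypotheses *)
    and xbar: "xbar \<in> Xstar A b gpsi Hpsi g"
    and Lpsi: "0 \<le> Lpsi" and delta0: "0 < delta0"
    and strict_cont: "\<forall>z\<in>cball (A *v xbar - b) delta0 \<inter> (\<lambda>u. A *v u - b) ` edom g.
        \<forall>z'\<in>cball (A *v xbar - b) delta0 \<inter> (\<lambda>u. A *v u - b) ` edom g.
          spec_norm (Hpsi z - Hpsi z') \<le> Lpsi * norm (z - z')"
  shows "\<forall>k. x k \<in> cball xbar (delta0 / spec_norm A / 2) \<longrightarrow>
      Lam_k a1 (Hpsi (A *v x k - b))
        \<le> a1 * Lpsi * spec_norm A * infdist (x k) (Xstar A b gpsi Hpsi g)"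
proof (intro allI impI)
  fix k
  define r where "r = delta0 / spec_norm A / 2"
  assume "x k \<in> cball xbar r"
  have in_dom: "x j \<in> edom g" for j
  proof (rule sequence_in_convex_set[of _ x, OF convex_edom[OF g_convex] x0])
    show "x (Suc j) \<in> closed_segment (x j) (y j)" for j
      unfolding x_next[rule_format] using beta by (intro step_in_closed_segment) auto
  qed (use y_dom in blast)
  have in_region: "A *v u - b \<in> cball (A *v xbar - b) delta0 \<inter> (\<lambda>u. A *v u - b) ` edom g"
    if "u \<in> edom g" "dist u xbar \<le> 2 * r" for u
    using that affine_image_in_cball[OF A_nz, of u xbar delta0 b] by (simp add: r_def)
  have "A *v x k - b \<in> U" using in_dom domg_O AO_U by blast
  note hessian_sym = hessian_symmetric[OF psi_grad psi_hess U_open hess_cont this]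
  show "Lam_k a1 (Hpsi (A *v x k - b))
      \<le> a1 * Lpsi * spec_norm A * infdist (x k) (Xstar A b gpsi Hpsi g)"
  proof (rule le_infdist_if_local_bound)
    fix z assume z: "z \<in> Xstar A b gpsi Hpsi g" "dist z xbar \<le> 2 * r"
    then have "z \<in> edom g" and psd_z: "psd (Hpsi (A *v z - b))" by (auto simp: Xstar_def Sstar_def)
    moreover have "dist (x k) xbar \<le> 2 * r"
      using \<open>x k \<in> cball xbar r\<close> zero_le_dist[of xbar "x k"] by (simp add: dist_commute del: zero_le_dist)
    ultimately have "spec_norm (Hpsi (A *v x k - b) - Hpsi (A *v z - b))
        \<le> Lpsi * norm ((A *v x k - b) - (A *v z - b))"
      using z(2) in_dom[of k] by (intro strict_cont[rule_format] in_region)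
    then show "Lam_k a1 (Hpsi (A *v x k - b)) \<le> a1 * Lpsi * spec_norm A * dist (x k) z"
      using a1 Lpsi by (intro Lam_k_le_lipschitz_dist[OF hessian_sym psd_z]) auto
  qed (use xbar \<open>x k \<in> cball xbar r\<close> a1 Lpsi spec_norm_nonneg[of A] in \<open>auto simp: dist_commute\<close>)
qed

end
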